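(* Let $k\ge2$, $n=2^k-1$. The binary simplex $(n,k)$ code has the Easy Repair Property.
   Context: The binary simplex $(n,k)$ code has generator matrix $G\in\mathbb F_2^{k\times n}$ whose columns $g_1,\dots,g_n$ are all the distinct nonzero vectors of $\mathbb F_2^k$. Nodes are coordinates $c_1,\dots,c_n$ of codewords $c=uG$. An erasure pattern is a set $S^e$ of erased nodes; the others are live. It is correctable if no two distinct codewords coincide on all live positions. A node $c_i$ is related to distinct nodes $c_{j_1},\dots,c_{j_\gamma}$ (all different from $c_i$) if $g_i=g_{j_1}+\dots+g_{j_\gamma}$. An erased node allows for easy repair if it is related to $\gamma\le2$ live nodes. An erasure pattern allows for easy repair if all erased nodes can be recovered by a sequence of easy repairs, where after each step the recovered node is regarded as live. A code has the Easy Repair Property if every correctable erasure pattern allows for easy repair. *)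

theory Defs
  imports "HOL-Library.Z2"
begin

text \<open>A simplex generator is given by its columns g 0, ..., g (n-1), n = 2^k - 1,
  which enumerate all distinct nonzero vectors of F_2^k (in some order).\<close>

definition vecs :: "nat \<Rightarrow> (nat \<Rightarrow> bit) set" where
  "vecs k = {v. \<forall>j\<ge>k. v j = 0}"

definition simplex_len :: "nat \<Rightarrow> nat" where
  "simplex_len k = 2 ^ k - 1"

definition simplex_gen :: "nat \<Rightarrow> (nat \<Rightarrow> nat \<Rightarrow> bit) \<Rightarrow> bool" where
  "simplex_gen k g \<longleftrightarrow> bij_betw g {..<simplex_len k} (vecs k - {\<lambda>_. 0})"

definition codeword :: "nat \<Rightarrow> (nat \<Rightarrow> nat \<Rightarrow> bit) \<Rightarrow> (nat \<Rightarrow> bit) \<Rightarrow> nat \<Rightarrow> bit" where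
  "codeword k g u i = (\<Sum>j<k. u j * g i j)"

definition correctable :: "nat \<Rightarrow> (nat \<Rightarrow> nat \<Rightarrow> bit) \<Rightarrow> nat set \<Rightarrow> bool" where
  "correctable k g E \<longleftrightarrow>
     (\<forall>u\<in>vecs k. \<forall>v\<in>vecs k.
        (\<forall>i<simplex_len k. i \<notin> E \<longrightarrow> codeword k g u i = codeword k g v i) \<longrightarrow>
        (\<forall>i<simplex_len k. codeword k g u i = codeword k g v i))"

definition related :: "nat \<Rightarrow> (nat \<Rightarrow> nat \<Rightarrow> bit) \<Rightarrow> nat \<Rightarrow> nat set \<Rightarrow> bool" where
  "related k g i J \<longleftrightarrow> J \<noteq> {} \<and> J \<subseteq> {..<simplex_len k} \<and> i \<notin> J \<and>
     (\<forall>t. g i t = (\<Sum>j\<in>J. g j t))"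

definition easy_repair_step :: "nat \<Rightarrow> (nat \<Rightarrow> nat \<Rightarrow> bit) \<Rightarrow> nat set \<Rightarrow> nat \<Rightarrow> bool" where
  "easy_repair_step k g L i \<longleftrightarrow> (\<exists>J. related k g i J \<and> card J \<le> 2 \<and> J \<subseteq> L)"

definition allows_easy_repair :: "nat \<Rightarrow> (nat \<Rightarrow> nat \<Rightarrow> bit) \<Rightarrow> nat set \<Rightarrow> bool" where
  "allows_easy_repair k g E \<longleftrightarrow>
     (\<exists>xs. distinct xs \<and> set xs = E \<and>
        (\<forall>m<length xs. easy_repair_step k g
            (({..<simplex_len k} - E) \<union> set (take m xs)) (xs ! m)))"

definition easy_repair_property :: "nat \<Rightarrow> (nat \<Rightarrow> nat \<Rightarrow> bit) \<Rightarrow> bool" where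
  "easy_repair_property k g \<longleftrightarrow>
     (\<forall>E. E \<subseteq> {..<simplex_len k} \<longrightarrow> correctable k g E \<longrightarrow> allows_easy_repair k g E)"

end

theory Submission
  imports Defs
begin

(* If no erased node could be repaired from two live nodes, then the live columns together
   with 0 would be closed under addition: the sum of two distinct live columns is a column
   (the code is a simplex code), and it cannot be erased. So they would form a subspace of
   F_2^k, proper since an erased column is missing from it. A nonzero u orthogonal to this
   subspace gives a nonzero codeword uG vanishing on all live positions, contradicting
   correctability. Hence some erased node is easily repairable; it becomes live, the smaller
   erasure pattern is still correctable, and induction on the pattern finishes the proof. *)

(* Z2 rewrites + and * on bit to XOR and AND by default; we reason in the field instead. *)
declare add_bit_eq_xor [simp del] mult_bit_eq_and [simp del]

lemma bit_add_self [simp]: "(x::bit) + x = 0"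
  by (cases x) simp_all

lemma bit_add_eq_0_iff: "(x::bit) + y = 0 \<longleftrightarrow> x = y"
  by (auto simp: add_eq_0_iff)

definition bit_inner :: "nat \<Rightarrow> (nat \<Rightarrow> bit) \<Rightarrow> (nat \<Rightarrow> bit) \<Rightarrow> bit" where
  "bit_inner k u x = (\<Sum>j<k. u j * x j)"

definition unit_vec :: "nat \<Rightarrow> nat \<Rightarrow> bit" where
  "unit_vec j = (\<lambda>t. if t = j then 1 else 0)"

definition bit_subspace :: "(nat \<Rightarrow> bit) set \<Rightarrow> bool" where
  "bit_subspace W \<longleftrightarrow> (\<lambda>_. 0) \<in> W \<and> (\<forall>x\<in>W. \<forall>y\<in>W. (\<lambda>j. x j + y j) \<in> W)"

lemma zero_in_vecs: "(\<lambda>_. 0) \<in> vecs k"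
  by (simp add: vecs_def)

lemma vecs_add: "x \<in> vecs k \<Longrightarrow> y \<in> vecs k \<Longrightarrow> (\<lambda>j. x j + y j) \<in> vecs k"
  by (simp add: vecs_def)

lemma vecs_SucD: "x \<in> vecs (Suc k) \<Longrightarrow> x k = 0 \<Longrightarrow> x \<in> vecs k"
  by (auto simp: vecs_def Suc_le_eq dest: le_neq_implies_less)

lemma vecs_nonzero_coordinate:
  assumes "u \<in> vecs k" "u \<noteq> (\<lambda>_. 0)"
  obtains j where "j < k" "u j \<noteq> 0"
proof -
  obtain j where "u j \<noteq> 0" using assms(2) by (auto simp: fun_eq_iff)
  moreover have "j < k" using assms(1) calculation by (auto simp: vecs_def not_less[symmetric])
  ultimately show thesis using that by blast
qed

lemma unit_vec_in_vecs: "j < k \<Longrightarrow> unit_vec j \<in> vecs k"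
  by (simp add: vecs_def unit_vec_def)

lemma unit_vec_nonzero: "unit_vec j \<noteq> (\<lambda>_. 0)"
  by (metis unit_vec_def one_neq_zero)

lemma bit_inner_commute: "bit_inner k u x = bit_inner k x u"
  by (simp add: bit_inner_def mult.commute)

lemma bit_inner_unit_vec: "j < k \<Longrightarrow> bit_inner k u (unit_vec j) = u j"
  by (simp add: bit_inner_def unit_vec_def if_distrib cong: if_cong)

lemma bit_inner_zero_left [simp]: "bit_inner k (\<lambda>_. 0) x = 0"
  by (simp add: bit_inner_def)

lemma bit_inner_add_right:
  "bit_inner k u (\<lambda>j. x j + y j) = bit_inner k u x + bit_inner k u y"
  by (simp add: bit_inner_def distrib_left sum.distrib)

lemma bit_inner_upd_Suc: "bit_inner (Suc k) (u(k := c)) x = bit_inner k u x + c * x k"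
  by (simp add: bit_inner_def)

lemma codeword_eq_bit_inner: "codeword k g u i = bit_inner k u (g i)"
  by (simp add: codeword_def bit_inner_def)

lemma bit_subspace_add:
  "bit_subspace W \<Longrightarrow> x \<in> W \<Longrightarrow> y \<in> W \<Longrightarrow> (\<lambda>j. x j + y j) \<in> W"
  by (simp add: bit_subspace_def)

lemma bit_subspace_slice: "bit_subspace W \<Longrightarrow> bit_subspace {x\<in>W. x k = 0}"
  by (simp add: bit_subspace_def)

(* If x k = 1 then x + w0 lies in the slice x k = 0, so u x = u w0: that is the value the
   new last coordinate must cancel. *)
lemma orthogonal_lift:
  assumes W: "bit_subspace W" and w0: "w0 \<in> W" "w0 k = 1"
    and orth: "\<And>x. x \<in> W \<Longrightarrow> x k = 0 \<Longrightarrow> bit_inner k u x = 0"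
    and x: "x \<in> W"
  shows "bit_inner (Suc k) (u(k := bit_inner k u w0)) x = 0"
proof (cases "x k = 0")
  case True
  then show ?thesis using orth x by (simp add: bit_inner_upd_Suc)
next
  case False
  then have "x k = 1" by simp
  moreover have "bit_inner k u (\<lambda>j. x j + w0 j) = 0"
    using bit_subspace_add[OF W x w0(1)] w0(2) \<open>x k = 1\<close> by (intro orth) auto
  ultimately show ?thesis by (simp add: bit_inner_upd_Suc bit_inner_add_right)
qed

lemma bit_subspace_slice_proper:
  assumes W: "bit_subspace W" "W \<subseteq> vecs (Suc k)" and w0: "w0 \<in> W" "w0 k = 1"
    and v: "v \<in> vecs (Suc k)" "v \<notin> W"
  obtains v' where "v' \<in> vecs k" "v' \<notin> {x\<in>W. x k = 0}"
proof (cases "v k = 0")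
  case True
  then show thesis using that v vecs_SucD by blast
next
  case False
  let ?v' = "\<lambda>j. v j + w0 j"
  have "?v' \<in> vecs k"
  proof (rule vecs_SucD)
    show "?v' \<in> vecs (Suc k)" using w0(1) W(2) v(1) by (auto intro: vecs_add)
    show "?v' k = 0" using False w0(2) by simp
  qed
  moreover have "?v' \<notin> W"
  proof
    assume "?v' \<in> W"
    from bit_subspace_add[OF W(1) this w0(1)] show False
      using v(2) by (simp add: add.assoc)
  qed
  ultimately show thesis using that by blast
qed

lemma exists_nonzero_orthogonal:
  assumes "bit_subspace W" "W \<subseteq> vecs k" "v \<in> vecs k" "v \<notin> W"
  shows "\<exists>u\<in>vecs k. u \<noteq> (\<lambda>_. 0) \<and> (\<forall>x\<in>W. bit_inner k u x = 0)"
  using assms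
proof (induction k arbitrary: W v)
  case 0
  then show ?case by (auto simp: vecs_def bit_subspace_def)
next
  case (Suc k)
  show ?case
  proof (cases "\<exists>w0\<in>W. w0 k = 1")
    case False
    then have "\<forall>x\<in>W. bit_inner (Suc k) (unit_vec k) x = 0"
      by (simp add: bit_inner_commute bit_inner_unit_vec)
    then show ?thesis using unit_vec_in_vecs unit_vec_nonzero by blast
  next
    case True
    then obtain w0 where w0: "w0 \<in> W" "w0 k = 1" by blast
    let ?W' = "{x\<in>W. x k = 0}"
    obtain v' where v': "v' \<in> vecs k" "v' \<notin> ?W'"
      using bit_subspace_slice_proper[OF Suc.prems(1,2) w0 Suc.prems(3,4)] .
    have "bit_subspace ?W'" using Suc.prems(1) by (rule bit_subspace_slice)
    moreover have "?W' \<subseteq> vecs k" using Suc.prems(2) by (auto intro: vecs_SucD)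
    ultimately obtain u where u: "u \<in> vecs k" "u \<noteq> (\<lambda>_. 0)" "\<forall>x\<in>?W'. bit_inner k u x = 0"
      using Suc.IH[of ?W' v'] v' by blast
    let ?u = "u(k := bit_inner k u w0)"
    have "?u \<in> vecs (Suc k)" using u(1) by (auto simp: vecs_def)
    moreover have "?u \<noteq> (\<lambda>_. 0)"
    proof -
      obtain j where "j < k" "u j \<noteq> 0" using vecs_nonzero_coordinate u(1,2) .
      then show ?thesis by (auto simp: fun_eq_iff intro!: exI[of _ j])
    qed
    moreover have "\<forall>x\<in>W. bit_inner (Suc k) ?u x = 0"
      using orthogonal_lift[OF Suc.prems(1) w0] u(3) by blast
    ultimately show ?thesis by blast
  qed
qed

lemma simplex_columnD:
  assumes "simplex_gen k g" "i < simplex_len k"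
  shows "g i \<in> vecs k" "g i \<noteq> (\<lambda>_. 0)"
  using assms by (auto simp: simplex_gen_def bij_betw_def)

lemma simplex_gen_inj: "simplex_gen k g \<Longrightarrow> inj_on g {..<simplex_len k}"
  by (simp add: simplex_gen_def bij_betw_def)

lemma simplex_column_exists:
  assumes "simplex_gen k g" "v \<in> vecs k" "v \<noteq> (\<lambda>_. 0)"
  obtains c where "c < simplex_len k" "g c = v"
proof -
  have "v \<in> g ` {..<simplex_len k}"
    using assms by (simp add: simplex_gen_def bij_betw_def)
  then show thesis using that by auto
qed

lemma simplex_codeword_nonzero:
  assumes sg: "simplex_gen k g" and u: "u \<in> vecs k" "u \<noteq> (\<lambda>_. 0)"
  obtains i where "i < simplex_len k" "codeword k g u i \<noteq> 0"
proof -
  obtain j where j: "j < k" "u j \<noteq> 0" using vecs_nonzero_coordinate u .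
  obtain c where c: "c < simplex_len k" "g c = unit_vec j"
    using simplex_column_exists[OF sg unit_vec_in_vecs[OF j(1)] unit_vec_nonzero] .
  have "codeword k g u c = u j"
    using c(2) j(1) by (simp add: codeword_eq_bit_inner bit_inner_unit_vec)
  then show thesis using that c(1) j(2) by simp
qed

lemma simplex_related_pair:
  assumes sg: "simplex_gen k g"
    and ab: "a < simplex_len k" "b < simplex_len k" "a \<noteq> b"
  obtains c where "c < simplex_len k" "related k g c {a, b}"
proof -
  let ?s = "\<lambda>t. g a t + g b t"
  have "?s \<in> vecs k" using simplex_columnD(1)[OF sg] ab by (intro vecs_add)
  moreover have "?s \<noteq> (\<lambda>_. 0)"
  proof
    assume "?s = (\<lambda>_. 0)"
    then have "g a = g b" by (auto simp: fun_eq_iff bit_add_eq_0_iff)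
    then show False using simplex_gen_inj[OF sg] ab by (auto dest: inj_onD)
  qed
  ultimately obtain c where c: "c < simplex_len k" "g c = ?s"
    using simplex_column_exists[OF sg] by blast
  have "c \<noteq> a"
  proof
    assume "c = a"
    with c(2) have "g b = (\<lambda>_. 0)" by (auto simp: fun_eq_iff dest: fun_cong)
    then show False using simplex_columnD(2)[OF sg ab(2)] by blast
  qed
  moreover have "c \<noteq> b"
  proof
    assume "c = b"
    with c(2) have "g a = (\<lambda>_. 0)" by (auto simp: fun_eq_iff dest: fun_cong)
    then show False using simplex_columnD(2)[OF sg ab(1)] by blast
  qed
  ultimately have "related k g c {a, b}"
    using ab c(2) by (auto simp: related_def)
  then show thesis using that c(1) by blast
qed

lemma live_columns_subspace:
  assumes sg: "simplex_gen k g"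
    and stuck: "\<forall>i\<in>E. \<not> easy_repair_step k g ({..<simplex_len k} - E) i"
  shows "bit_subspace (insert (\<lambda>_. 0) (g ` ({..<simplex_len k} - E)))"
    (is "bit_subspace ?W")
  unfolding bit_subspace_def
proof (intro conjI ballI)
  fix x y assume x: "x \<in> ?W" and y: "y \<in> ?W"
  consider "x = (\<lambda>_. 0)" | "y = (\<lambda>_. 0)" | "x = y"
    | a b where "a \<in> {..<simplex_len k} - E" "b \<in> {..<simplex_len k} - E"
        "x = g a" "y = g b" "a \<noteq> b"
    using x y by blast
  then show "(\<lambda>j. x j + y j) \<in> ?W"
  proof cases
    case 4
    then obtain c where c: "c < simplex_len k" "related k g c {a, b}"
      using simplex_related_pair[OF sg] by blast
    have "card {a, b} \<le> 2" by (simp add: card_insert_if)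
    then have "c \<notin> E" using stuck c(2) 4(1,2) by (auto simp: easy_repair_step_def)
    moreover have "g c = (\<lambda>j. x j + y j)" using c(2) 4 by (auto simp: related_def)
    ultimately show ?thesis using c(1) by (metis DiffI image_eqI insertCI lessThan_iff)
  qed (use x y in auto)
qed simp

lemma correctable_imp_easy_repair_step:
  assumes sg: "simplex_gen k g" and E: "E \<subseteq> {..<simplex_len k}" "E \<noteq> {}"
    and corr: "correctable k g E"
  shows "\<exists>i\<in>E. easy_repair_step k g ({..<simplex_len k} - E) i"
proof (rule ccontr)
  assume "\<not> ?thesis"
  then have stuck: "\<forall>i\<in>E. \<not> easy_repair_step k g ({..<simplex_len k} - E) i" by blast
  let ?W = "insert (\<lambda>_. 0) (g ` ({..<simplex_len k} - E))"
  obtain i where i: "i \<in> E" using E(2) by blast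
  have i_len: "i < simplex_len k" using i E(1) by blast
  have "?W \<subseteq> vecs k" using simplex_columnD(1)[OF sg] zero_in_vecs by blast
  moreover have "g i \<notin> ?W"
    using simplex_columnD(2)[OF sg i_len] simplex_gen_inj[OF sg] i i_len
    by (auto dest: inj_onD)
  ultimately obtain u where u: "u \<in> vecs k" "u \<noteq> (\<lambda>_. 0)" "\<forall>x\<in>?W. bit_inner k u x = 0"
    using exists_nonzero_orthogonal[OF live_columns_subspace[OF sg stuck]]
      simplex_columnD(1)[OF sg i_len] by blast
  have "\<forall>j<simplex_len k. j \<notin> E \<longrightarrow> codeword k g u j = codeword k g (\<lambda>_. 0) j"
    using u(3) by (simp add: codeword_eq_bit_inner)
  then have "\<forall>j<simplex_len k. codeword k g u j = codeword k g (\<lambda>_. 0) j"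
    using corr u(1) zero_in_vecs[of k] unfolding correctable_def by blast
  then have "\<forall>j<simplex_len k. codeword k g u j = 0"
    by (simp add: codeword_eq_bit_inner)
  then show False using simplex_codeword_nonzero[OF sg u(1,2)] by blast
qed

lemma correctable_mono: "E' \<subseteq> E \<Longrightarrow> correctable k g E \<Longrightarrow> correctable k g E'"
  unfolding correctable_def by blast

lemma allows_easy_repair_insert:
  assumes i: "i < simplex_len k" "i \<in> E"
    and step: "easy_repair_step k g ({..<simplex_len k} - E) i"
    and rest: "allows_easy_repair k g (E - {i})"
  shows "allows_easy_repair k g E"
proof -
  obtain xs where xs: "distinct xs" "set xs = E - {i}"
    "\<forall>m<length xs. easy_repair_step k g (({..<simplex_len k} - (E - {i})) \<union> set (take m xs)) (xs ! m)"
    using rest unfolding allows_easy_repair_def by blast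
  have live: "{..<simplex_len k} - (E - {i}) = insert i ({..<simplex_len k} - E)"
    using i by auto
  have "\<forall>m<length (i # xs).
      easy_repair_step k g (({..<simplex_len k} - E) \<union> set (take m (i # xs))) ((i # xs) ! m)"
    using step xs(3) by (auto simp: live less_Suc_eq_0_disj)
  moreover have "distinct (i # xs)" "set (i # xs) = E" using xs(1,2) i(2) by auto
  ultimately show ?thesis unfolding allows_easy_repair_def by blast
qed

lemma correctable_allows_easy_repair:
  assumes sg: "simplex_gen k g" and "E \<subseteq> {..<simplex_len k}" "correctable k g E"
  shows "allows_easy_repair k g E"
proof -
  have "finite E" using assms(2) finite_subset by blast
  then show ?thesis using assms(2,3)
  proof (induction E rule: finite_psubset_induct)
    case (psubset E)
    show ?case
    proof (cases "E = {}")
      case True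
      then show ?thesis by (simp add: allows_easy_repair_def)
    next
      case False
      then obtain i where i: "i \<in> E" "easy_repair_step k g ({..<simplex_len k} - E) i"
        using correctable_imp_easy_repair_step[OF sg psubset.prems(1) False psubset.prems(2)] by blast
      have "allows_easy_repair k g (E - {i})"
        using psubset.IH[of "E - {i}"] psubset.prems correctable_mono[of "E - {i}" E] i(1) by blast
      then show ?thesis using allows_easy_repair_insert i psubset.prems(1) by blast
    qed
  qed
qed

theorem theorem3p2:
  fixes k :: nat and g :: "nat \<Rightarrow> nat \<Rightarrow> bit"
  assumes "k \<ge> 2" and "simplex_gen k g"
  shows "easy_repair_property k g"
  unfolding easy_repair_property_def
  using correctable_allows_easy_repair[OF assms(2)] by blast

end
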